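(* Let $n > 1$ and let $H_n$ denote the Boolean hypercube graph on vertex set $\{0,1\}^n$, in which two vertices are adjacent iff they differ in exactly one coordinate. Suppose $K \subseteq \{0,1\}^n$ satisfies $|K| > 2^{n-1}$, and suppose that for some $D > 0$ every $y \in K$ has degree at most $D$ in the induced subgraph $H_n[K]$ (the graph on vertex set $K$ whose edges are the edges of $H_n$ with both endpoints in $K$). Then $\mathrm{compl}(\mathcal{G}_{CS,n}) \leq D$.
   Context: Let $S_n$ be the set of permutations $\pi=(\pi(1),\dots,\pi(n))$ of $[n]=\{1,\dots,n\}$. A Bob-strategy is a family of functions $F_t : S_n \to \{0,1\}$, $t=1,\dots,n-1$, where each $F_t$ is $t$-restricted, i.e. $F_t(\pi)$ depends only on $\pi(1),\dots,\pi(t)$. For a fixed Bob-strategy, a permutation $\pi\in S_n$ and $z\in\{0,1\}$, define $b(\pi,z)\in\{0,1\}^n$ by $b_j = F_t(\pi)$ if $j=\pi(t)$ for some $t<n$, and $b_j = z$ if $j=\pi(n)$. For $b\in\{0,1\}^n$, the suspect set is $S(b) := \{ i \in [n] : \exists \rho\in S_n, u\in\{0,1\} \text{ with } \rho(n)=i \text{ and } b(\rho,u)=b\}$. The cost of the strategy on $(\pi,z)$ is $|S(b(\pi,z))|$; the complexity of the strategy is the maximum cost over all pairs $(\pi,z)\in S_n\times\{0,1\}$; and $\mathrm{compl}(\mathcal{G}_{CS,n})$ is the minimum complexity over all Bob-strategies for $n$. *)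

theory Defs
  imports Complex_Main "HOL-Combinatorics.Permutations"
begin

text \<open>Permutations of [n] are functions pi with pi permutes {1..n}.
  A Bob-strategy is F :: nat => (nat => nat) => bool, F t being the function F_t.\<close>

definition t_restricted :: "nat \<Rightarrow> nat \<Rightarrow> ((nat \<Rightarrow> nat) \<Rightarrow> bool) \<Rightarrow> bool" where
  "t_restricted n t G \<longleftrightarrow>
     (\<forall>\<pi> \<sigma>. \<pi> permutes {1..n} \<longrightarrow> \<sigma> permutes {1..n} \<longrightarrow>
        (\<forall>i\<in>{1..t}. \<pi> i = \<sigma> i) \<longrightarrow> G \<pi> = G \<sigma>)"

definition bob_strategy :: "nat \<Rightarrow> (nat \<Rightarrow> (nat \<Rightarrow> nat) \<Rightarrow> bool) \<Rightarrow> bool" where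
  "bob_strategy n F \<longleftrightarrow> (\<forall>t\<in>{1..n-1}. t_restricted n t (F t))"

definition bvec :: "nat \<Rightarrow> (nat \<Rightarrow> (nat \<Rightarrow> nat) \<Rightarrow> bool) \<Rightarrow> (nat \<Rightarrow> nat) \<Rightarrow> bool \<Rightarrow> (nat \<Rightarrow> bool)" where
  "bvec n F \<pi> z = (\<lambda>j. if j \<in> {1..n} then
      (if j = \<pi> n then z else F (inv \<pi> j) \<pi>) else False)"

definition suspects :: "nat \<Rightarrow> (nat \<Rightarrow> (nat \<Rightarrow> nat) \<Rightarrow> bool) \<Rightarrow> (nat \<Rightarrow> bool) \<Rightarrow> nat set" where
  "suspects n F b = {i \<in> {1..n}. \<exists>\<rho> u. \<rho> permutes {1..n} \<and> \<rho> n = i \<and> bvec n F \<rho> u = b}"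

definition cost :: "nat \<Rightarrow> (nat \<Rightarrow> (nat \<Rightarrow> nat) \<Rightarrow> bool) \<Rightarrow> (nat \<Rightarrow> nat) \<Rightarrow> bool \<Rightarrow> nat" where
  "cost n F \<pi> z = card (suspects n F (bvec n F \<pi> z))"

definition complexity :: "nat \<Rightarrow> (nat \<Rightarrow> (nat \<Rightarrow> nat) \<Rightarrow> bool) \<Rightarrow> nat" where
  "complexity n F = Max {cost n F \<pi> z | \<pi> z. \<pi> permutes {1..n}}"

definition compl_CS :: "nat \<Rightarrow> nat" where
  "compl_CS n = (LEAST c. \<exists>F. bob_strategy n F \<and> complexity n F = c)"

text \<open>Boolean hypercube H_n: vertices are bool lists of length n.\<close>
definition hc_adj :: "bool list \<Rightarrow> bool list \<Rightarrow> bool" where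
  "hc_adj x y \<longleftrightarrow> length x = length y \<and> card {i. i < length x \<and> x ! i \<noteq> y ! i} = 1"

definition induced_degree :: "bool list set \<Rightarrow> bool list \<Rightarrow> nat" where
  "induced_degree K y = card {x \<in> K. hc_adj y x}"

end

theory Submission
  imports Defs
begin

text \<open>Bob plays the majority strategy for K: when coordinate \<open>\<pi> t\<close> is revealed he answers
  the value taken by at least half of those points of K that agree with his earlier answers.
  Each answer at most halves the number of consistent points, so after \<open>n - 1\<close> answers more than
  one point of K is consistent; these two points form a hypercube edge in direction \<open>\<pi> n\<close>, hence
  every outcome vector b(\<pi>,z) lies in K. A suspect i of b is witnessed by some \<open>(\<rho>, u)\<close>
  with \<open>\<rho> n = i\<close>, and b(\<rho>,\<not>u) is b with bit i flipped, again in K: the suspects of b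
  inject into the neighbours of b in the induced subgraph.\<close>

definition to_list :: "nat \<Rightarrow> (nat \<Rightarrow> bool) \<Rightarrow> bool list" where
  "to_list n b = map (\<lambda>k. b (Suc k)) [0..<n]"

definition flip :: "bool list \<Rightarrow> nat \<Rightarrow> bool list" where
  "flip xs p = xs[p := \<not> xs ! p]"

lemma length_to_list [simp]: "length (to_list n b) = n"
  unfolding to_list_def by simp

lemma nth_to_list [simp]: "k < n \<Longrightarrow> to_list n b ! k = b (Suc k)"
  unfolding to_list_def by simp

lemma hc_adj_flip: "p < length xs \<Longrightarrow> hc_adj xs (flip xs p)"
proof -
  assume p: "p < length xs"
  have "{i. i < length xs \<and> xs ! i \<noteq> flip xs p ! i} = {p}"
    using p unfolding flip_def by (auto simp: nth_list_update)
  then show ?thesis unfolding hc_adj_def flip_def by simp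
qed

lemma inj_on_flip: "inj_on (\<lambda>i. flip xs (i - 1)) {1..length xs}"
proof (rule inj_onI)
  fix i i' assume "i \<in> {1..length xs}" "i' \<in> {1..length xs}" "flip xs (i - 1) = flip xs (i' - 1)"
  then have "flip xs (i - 1) ! (i - 1) = flip xs (i' - 1) ! (i - 1)" by simp
  with \<open>i \<in> _\<close> \<open>i' \<in> _\<close> show "i = i'"
    unfolding flip_def by (cases "i = i'") (auto simp: nth_list_update)
qed

lemma permutes_last_in:
  fixes n :: nat
  assumes "\<rho> permutes {1..n}" "0 < n"
  shows "\<rho> n \<in> {1..n}"
proof -
  have "n \<in> {1..n}" using assms(2) by simp
  then show ?thesis using permutes_in_image[OF assms(1)] by blast
qed

lemma permutes_earlier_index:
  fixes n :: nat
  assumes "\<rho> permutes {1..n}" "j \<in> {1..n}" "j \<noteq> \<rho> n"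
  obtains i where "i \<in> {1..n-1}" "\<rho> i = j"
proof
  show "\<rho> (inv \<rho> j) = j"
    using assms(1) by (rule permutes_inverses(1))
  moreover have "inv \<rho> j \<in> {1..n}"
    using assms(2) permutes_in_image[OF permutes_inv[OF assms(1)]] by blast
  moreover have "inv \<rho> j \<noteq> n"
    using calculation(1) assms(3) by auto
  ultimately show "inv \<rho> j \<in> {1..n-1}"
    by auto
qed

lemma to_list_bvec_negate:
  assumes "\<rho> permutes {1..n}" "0 < n"
  shows "to_list n (bvec n F \<rho> (\<not> u)) = flip (to_list n (bvec n F \<rho> u)) (\<rho> n - 1)"
  using permutes_last_in[OF assms]
  by (intro nth_equalityI) (auto simp: flip_def bvec_def nth_list_update)

lemma cost_le_induced_degree:
  assumes "finite K" "0 < n"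
    and outcomes: "\<And>\<rho> u. \<rho> permutes {1..n} \<Longrightarrow> to_list n (bvec n F \<rho> u) \<in> K"
  shows "cost n F \<pi> z \<le> induced_degree K (to_list n (bvec n F \<pi> z))"
proof -
  define b where "b = bvec n F \<pi> z"
  define xs where "xs = to_list n b"
  have "(\<lambda>i. flip xs (i - 1)) ` suspects n F b \<subseteq> {y \<in> K. hc_adj xs y}"
  proof
    fix y assume "y \<in> (\<lambda>i. flip xs (i - 1)) ` suspects n F b"
    then obtain \<rho> u where \<rho>: "\<rho> permutes {1..n}" "bvec n F \<rho> u = b"
      and y: "y = flip xs (\<rho> n - 1)"
      unfolding suspects_def by blast
    have "y = to_list n (bvec n F \<rho> (\<not> u))"
      using to_list_bvec_negate[OF \<rho>(1) \<open>0 < n\<close>] \<rho>(2) y xs_def by simp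
    moreover have "hc_adj xs y"
      using y hc_adj_flip permutes_last_in[OF \<rho>(1) \<open>0 < n\<close>] xs_def by auto
    ultimately show "y \<in> {y \<in> K. hc_adj xs y}" using outcomes[OF \<rho>(1)] by simp
  qed
  moreover have "suspects n F b \<subseteq> {1..length xs}"
    unfolding suspects_def xs_def by auto
  then have "inj_on (\<lambda>i. flip xs (i - 1)) (suspects n F b)"
    by (rule inj_on_subset[OF inj_on_flip])
  ultimately have "card (suspects n F b) \<le> card {y \<in> K. hc_adj xs y}"
    using \<open>finite K\<close> by (intro card_inj_on_le) auto
  then show ?thesis unfolding cost_def induced_degree_def b_def xs_def .
qed

lemma complexity_attained:
  "\<exists>\<pi> z. \<pi> permutes {1..n} \<and> complexity n F = cost n F \<pi> z"
proof -
  define C where "C = {cost n F \<pi> z | \<pi> z. \<pi> permutes {1..n}}"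
  have "C = (\<lambda>(\<pi>, z). cost n F \<pi> z) ` ({\<pi>. \<pi> permutes {1..n}} \<times> UNIV)"
    unfolding C_def by auto
  then have "finite C" using finite_permutations[of "{1..n}"] by simp
  moreover have "C \<noteq> {}" unfolding C_def using permutes_id by blast
  ultimately have "Max C \<in> C" by (rule Max_in)
  then show ?thesis unfolding complexity_def C_def by auto
qed

lemma compl_CS_le_complexity: "bob_strategy n F \<Longrightarrow> compl_CS n \<le> complexity n F"
  unfolding compl_CS_def by (rule Least_le) blast

definition consistent :: "bool list set \<Rightarrow> (nat \<Rightarrow> nat) \<Rightarrow> (nat \<Rightarrow> bool) \<Rightarrow> nat \<Rightarrow> bool list set" where
  "consistent K \<pi> a t = {x \<in> K. \<forall>i\<in>{1..t}. x ! (\<pi> i - 1) = a (\<pi> i)}"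

fun majority_bits :: "bool list set \<Rightarrow> (nat \<Rightarrow> nat) \<Rightarrow> nat \<Rightarrow> nat \<Rightarrow> bool" where
  "majority_bits K \<pi> 0 = (\<lambda>j. False)"
| "majority_bits K \<pi> (Suc t) = (majority_bits K \<pi> t)(\<pi> (Suc t) :=
     card {x \<in> consistent K \<pi> (majority_bits K \<pi> t) t. x ! (\<pi> (Suc t) - 1)}
       \<ge> card {x \<in> consistent K \<pi> (majority_bits K \<pi> t) t. \<not> x ! (\<pi> (Suc t) - 1)})"

definition majority_strategy :: "bool list set \<Rightarrow> nat \<Rightarrow> (nat \<Rightarrow> nat) \<Rightarrow> bool" where
  "majority_strategy K t \<pi> = majority_bits K \<pi> t (\<pi> t)"

lemma majority_bits_prefix_determined:
  "\<forall>i\<in>{1..t}. \<pi> i = \<sigma> i \<Longrightarrow> majority_bits K \<pi> t = majority_bits K \<sigma> t"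
proof (induction t)
  case (Suc t)
  then have IH: "majority_bits K \<pi> t = majority_bits K \<sigma> t" by auto
  have "consistent K \<pi> (majority_bits K \<pi> t) t = consistent K \<sigma> (majority_bits K \<sigma> t) t"
    using Suc.prems IH unfolding consistent_def by auto
  moreover have "\<pi> (Suc t) = \<sigma> (Suc t)" using Suc.prems by auto
  ultimately show ?case using IH by simp
qed simp

lemma bob_strategy_majority: "bob_strategy n (majority_strategy K)"
  unfolding bob_strategy_def t_restricted_def majority_strategy_def
proof (intro ballI allI impI)
  fix t :: nat and \<pi> \<sigma> :: "nat \<Rightarrow> nat"
  assume "t \<in> {1..n-1}" "\<pi> permutes {1..n}" "\<sigma> permutes {1..n}"
    and prefix: "\<forall>i\<in>{1..t}. \<pi> i = \<sigma> i"
  then have "\<pi> t = \<sigma> t" by auto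
  with majority_bits_prefix_determined[OF prefix]
  show "majority_bits K \<pi> t (\<pi> t) = majority_bits K \<sigma> t (\<sigma> t)" by simp
qed

lemma majority_bits_stable:
  assumes "inj \<pi>" "1 \<le> i" "i \<le> t"
  shows "majority_bits K \<pi> t (\<pi> i) = majority_bits K \<pi> i (\<pi> i)"
  using assms(3)
proof (induction t)
  case (Suc t)
  show ?case
  proof (cases "i = Suc t")
    case False
    then have "\<pi> i \<noteq> \<pi> (Suc t)" using assms(1) by (meson injD)
    with False Suc show ?thesis by simp
  qed simp
qed (use assms(2) in simp)

lemma consistent_majority_step:
  assumes "inj \<pi>" "finite K"
  shows "2 * card (consistent K \<pi> (majority_bits K \<pi> (Suc t)) (Suc t))
           \<ge> card (consistent K \<pi> (majority_bits K \<pi> t) t)"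
proof -
  define S where "S = consistent K \<pi> (majority_bits K \<pi> t) t"
  define j where "j = \<pi> (Suc t) - 1"
  define ST where "ST = {x \<in> S. x ! j}"
  define SF where "SF = {x \<in> S. \<not> x ! j}"
  define c where "c = (card ST \<ge> card SF)"
  have "finite S" using assms(2) unfolding S_def consistent_def by auto
  then have cardS: "card S = card ST + card SF"
    unfolding ST_def SF_def by (subst card_Un_disjoint[symmetric]) (auto intro: arg_cong[where f = card])
  have update: "majority_bits K \<pi> (Suc t) = (majority_bits K \<pi> t)(\<pi> (Suc t) := c)"
    by (simp add: c_def ST_def SF_def S_def j_def)
  have "\<pi> i \<noteq> \<pi> (Suc t)" if "i \<in> {1..t}" for i
  proof
    assume "\<pi> i = \<pi> (Suc t)"
    then have "i = Suc t" by (rule injD[OF assms(1)])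
    with that show False by simp
  qed
  moreover have "{1..Suc t} = insert (Suc t) {1..t}" by auto
  ultimately have "consistent K \<pi> (majority_bits K \<pi> (Suc t)) (Suc t) = {x \<in> S. x ! j = c}"
    unfolding update S_def consistent_def j_def by (auto simp del: majority_bits.simps)
  also have "\<dots> = (if c then ST else SF)"
    unfolding ST_def SF_def by auto
  finally show ?thesis
    using cardS unfolding S_def c_def by (simp del: majority_bits.simps)
qed

lemma card_consistent_majority:
  assumes "\<pi> permutes {1..n}" "finite K" "card K > 2 ^ (n - 1)" "t \<le> n - 1"
  shows "card (consistent K \<pi> (majority_bits K \<pi> t) t) > 2 ^ (n - 1 - t)"
  using assms(4)
proof (induction t)
  case 0
  have "consistent K \<pi> (majority_bits K \<pi> 0) 0 = K" unfolding consistent_def by auto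
  then show ?case using assms(3) by simp
next
  case (Suc t)
  have "(2::nat) ^ (n - 1 - t) = 2 * 2 ^ (n - 1 - Suc t)"
    using Suc.prems by (simp add: Suc_diff_Suc flip: power_Suc)
  with Suc consistent_majority_step[OF permutes_inj[OF assms(1)] assms(2), of t] show ?case
    by (simp del: majority_bits.simps)
qed

lemma to_list_bvec_majority:
  assumes "\<rho> permutes {1..n}" "0 < n" "K \<subseteq> {x. length x = n}"
    and x: "x \<in> consistent K \<rho> (majority_bits K \<rho> (n - 1)) (n - 1)" "x ! (\<rho> n - 1) = u"
  shows "to_list n (bvec n (majority_strategy K) \<rho> u) = x"
proof (rule nth_equalityI)
  show "length (to_list n (bvec n (majority_strategy K) \<rho> u)) = length x"
    using x(1) assms(3) unfolding consistent_def by auto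
next
  fix k assume "k < length (to_list n (bvec n (majority_strategy K) \<rho> u))"
  then have k: "Suc k \<in> {1..n}" by simp
  show "to_list n (bvec n (majority_strategy K) \<rho> u) ! k = x ! k"
  proof (cases "Suc k = \<rho> n")
    case True
    then have "k = \<rho> n - 1" by simp
    with True k x(2) show ?thesis by (simp add: bvec_def)
  next
    case False
    obtain i where i: "i \<in> {1..n-1}" "\<rho> i = Suc k"
      using permutes_earlier_index[OF assms(1) k False] .
    have inj: "inj \<rho>" using assms(1) permutes_inj by blast
    then have "inv \<rho> (Suc k) = i" using i by (metis inv_f_f)
    then have "to_list n (bvec n (majority_strategy K) \<rho> u) ! k = majority_bits K \<rho> i (\<rho> i)"
      using k False i unfolding bvec_def majority_strategy_def by simp
    also have "\<dots> = majority_bits K \<rho> (n - 1) (\<rho> i)"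
      using majority_bits_stable[OF inj, of i "n - 1"] i by simp
    also have "\<dots> = x ! k"
      using x(1) i unfolding consistent_def by force
    finally show ?thesis .
  qed
qed

lemma to_list_bvec_majority_mem:
  assumes "\<rho> permutes {1..n}" "0 < n" "K \<subseteq> {x. length x = n}"
    and "finite K" "card K > 2 ^ (n - 1)"
  shows "to_list n (bvec n (majority_strategy K) \<rho> u) \<in> K"
proof -
  define S where "S = consistent K \<rho> (majority_bits K \<rho> (n - 1)) (n - 1)"
  have "card S > 1"
    using card_consistent_majority[OF assms(1,4,5), of "n - 1"] by (simp add: S_def)
  moreover have "finite S"
    using assms(4) unfolding S_def consistent_def by simp
  ultimately obtain x y where xy: "x \<in> S" "y \<in> S" "x \<noteq> y"
    by (metis One_nat_def card_le_Suc0_iff_eq not_less)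
  have "x ! (\<rho> n - 1) \<noteq> y ! (\<rho> n - 1)"
  proof
    assume "x ! (\<rho> n - 1) = y ! (\<rho> n - 1)"
    moreover have "to_list n (bvec n (majority_strategy K) \<rho> (x ! (\<rho> n - 1))) = x"
      using to_list_bvec_majority[OF assms(1-3)] xy(1) unfolding S_def by blast
    moreover have "to_list n (bvec n (majority_strategy K) \<rho> (y ! (\<rho> n - 1))) = y"
      using to_list_bvec_majority[OF assms(1-3)] xy(2) unfolding S_def by blast
    ultimately have "x = y" by simp
    with xy(3) show False ..
  qed
  then have "u = x ! (\<rho> n - 1) \<or> u = y ! (\<rho> n - 1)"
    by (cases u; cases "x ! (\<rho> n - 1)") auto
  then have "to_list n (bvec n (majority_strategy K) \<rho> u) \<in> S"
    using to_list_bvec_majority[OF assms(1-3)] xy(1,2) unfolding S_def by auto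
  then show ?thesis unfolding S_def consistent_def by simp
qed

theorem theorem1:
  fixes n :: nat and K :: "bool list set" and D :: real
  assumes "n > 1"
    and "K \<subseteq> {x. length x = n}"
    and "card K > 2 ^ (n - 1)"
    and "D > 0"
    and "\<forall>y\<in>K. real (induced_degree K y) \<le> D"
  shows "real (compl_CS n) \<le> D"
proof -
  have "finite K" "0 < n" using assms(1,3) card.infinite by fastforce+
  define F where "F = majority_strategy K"
  have outcomes: "\<And>\<rho> u. \<rho> permutes {1..n} \<Longrightarrow> to_list n (bvec n F \<rho> u) \<in> K"
    unfolding F_def using to_list_bvec_majority_mem assms(2,3) \<open>finite K\<close> \<open>0 < n\<close> by blast
  obtain \<pi> z where "\<pi> permutes {1..n}" and complexity: "complexity n F = cost n F \<pi> z"
    using complexity_attained by blast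
  have "compl_CS n \<le> complexity n F"
    unfolding F_def by (rule compl_CS_le_complexity[OF bob_strategy_majority])
  also have "\<dots> = cost n F \<pi> z" by (fact complexity)
  also have "\<dots> \<le> induced_degree K (to_list n (bvec n F \<pi> z))"
    using cost_le_induced_degree[OF \<open>finite K\<close> \<open>0 < n\<close> outcomes] .
  finally have "real (compl_CS n) \<le> real (induced_degree K (to_list n (bvec n F \<pi> z)))"
    by simp
  also have "\<dots> \<le> D"
    using assms(5) outcomes[OF \<open>\<pi> permutes _\<close>] by blast
  finally show ?thesis .
qed

end
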